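(* Let $p,p'\ge1$ with $|p-p'|=1$ and let $S=\alpha_{(p,p')}(S')$ where $S'$ is a Sturmian word in which $bb$ does not occur. Let $P$ be a palindrome that is maximal in $S$. Then $P$ is original (in the level $S=\alpha_{(p,p')}(S')$) if and only if $|P|_b\le 1$.
   Context: $\alpha_{(p,p')}$ is the morphism $a\mapsto a^pb$, $b\mapsto a^{p'}b$. A Sturmian word is a right-infinite aperiodic word over $\{a,b\}$ with exactly $n+1$ factors of each length $n$. A palindrome $P$ is maximal in $S$ if $lPl'$ is a factor of $S$ for some letters $l\neq l'$; such an occurrence of $P$ is a maximal occurrence. A center occurrence is an occurrence of $a$, $b$ or $aa$. Write $S'=y_1y_2\cdots$, $S=\alpha(y_1)\alpha(y_2)\cdots$, $\alpha(y_j)$ occupying positions $s_j+1,\dots,s_j+|\alpha(y_j)|$, $s_j=\sum_{t<j}|\alpha(y_t)|$. The reflection of an occurrence $y_j=a$ (resp. $b$) is the center (middle letter if odd length, middle two letters if even) of the run $a^p$ (resp. $a^{p'}$) at positions $s_j+1,\dots,s_j+p$ (resp. $s_j+p'$); the reflection of an occurrence $y_jy_{j+1}=aa$ is the $b$ at position $s_j+p+1$. A center occurrence of $S$ is original if it is not the reflection of any center occurrence of $S'$. A maximal palindrome $P$ of $S$ is original if some maximal occurrence of $P$ in $S$ has an original center occurrence, and is a reflection otherwise. *)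

theory Defs
  imports Main
begin

(* Words over the alphabet {a,b}.  Right-infinite words are functions nat => letter,
   positions are 0-based (position k here = position k+1 in the paper). *)
datatype letter = A | B

type_synonym iword = "nat \<Rightarrow> letter"

definition fac :: "iword \<Rightarrow> nat \<Rightarrow> nat \<Rightarrow> letter list" where
  "fac w i n = map w [i..<i+n]"

definition factors :: "iword \<Rightarrow> nat \<Rightarrow> letter list set" where
  "factors w n = {fac w i n | i. True}"

definition is_factor :: "letter list \<Rightarrow> iword \<Rightarrow> bool" where
  "is_factor u w \<longleftrightarrow> (\<exists>i. fac w i (length u) = u)"

definition aperiodic :: "iword \<Rightarrow> bool" where
  "aperiodic w \<longleftrightarrow> \<not> (\<exists>q>0. \<exists>N. \<forall>i\<ge>N. w (i + q) = w i)"

definition sturmian :: "iword \<Rightarrow> bool" where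
  "sturmian w \<longleftrightarrow> aperiodic w \<and> (\<forall>n. card (factors w n) = n + 1)"

definition alpha :: "nat \<Rightarrow> nat \<Rightarrow> letter \<Rightarrow> letter list" where
  "alpha p p' x = (case x of A \<Rightarrow> replicate p A @ [B] | B \<Rightarrow> replicate p' A @ [B])"

definition offs :: "nat \<Rightarrow> nat \<Rightarrow> iword \<Rightarrow> nat \<Rightarrow> nat" where
  "offs p p' y j = (\<Sum>t<j. length (alpha p p' (y t)))"

(* S = alpha(y_0) alpha(y_1) ... ; block j occupies 0-based positions offs j .. offs j + |alpha(y_j)| - 1 *)
definition morph_image :: "nat \<Rightarrow> nat \<Rightarrow> iword \<Rightarrow> iword \<Rightarrow> bool" where
  "morph_image p p' y S \<longleftrightarrow>
     (\<forall>j i. i < length (alpha p p' (y j)) \<longrightarrow> S (offs p p' y j + i) = alpha p p' (y j) ! i)"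

definition palindrome :: "letter list \<Rightarrow> bool" where
  "palindrome P \<longleftrightarrow> rev P = P"

(* An occurrence of a factor is a pair (start position, length). *)
definition maximal_occ :: "iword \<Rightarrow> letter list \<Rightarrow> nat \<Rightarrow> bool" where
  "maximal_occ S P k \<longleftrightarrow> 1 \<le> k \<and> fac S k (length P) = P \<and> S (k - 1) \<noteq> S (k + length P)"

definition maximal_in :: "letter list \<Rightarrow> iword \<Rightarrow> bool" where
  "maximal_in P S \<longleftrightarrow> (\<exists>l l'. l \<noteq> l' \<and> is_factor (l # P @ [l']) S)"

definition center :: "nat \<Rightarrow> nat \<Rightarrow> nat \<times> nat" where
  "center k n = (if odd n then (k + n div 2, 1) else (k + n div 2 - 1, 2))"

definition center_occ :: "iword \<Rightarrow> nat \<times> nat \<Rightarrow> bool" where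
  "center_occ w c \<longleftrightarrow> (let (i, n) = c in fac w i n \<in> {[A], [B], [A, A]})"

(* reflections in S = alpha_(p,p')(y) of the center occurrences of y *)
definition reflections :: "nat \<Rightarrow> nat \<Rightarrow> iword \<Rightarrow> (nat \<times> nat) set" where
  "reflections p p' y =
     {center (offs p p' y j) (if y j = A then p else p') | j. True}
     \<union> {(offs p p' y j + p, 1) | j. y j = A \<and> y (Suc j) = A}"

definition original_center :: "nat \<Rightarrow> nat \<Rightarrow> iword \<Rightarrow> iword \<Rightarrow> nat \<times> nat \<Rightarrow> bool" where
  "original_center p p' y S c \<longleftrightarrow> center_occ S c \<and> c \<notin> reflections p p' y"

definition original_pal :: "nat \<Rightarrow> nat \<Rightarrow> iword \<Rightarrow> iword \<Rightarrow> letter list \<Rightarrow> bool" where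
  "original_pal p p' y S P \<longleftrightarrow>
     (\<exists>k. maximal_occ S P k \<and> original_center p p' y S (center k (length P)))"

end

theory Submission
  imports Defs
begin

text \<open>The b's of \<open>S\<close> sit exactly at the ends of the blocks \<open>\<alpha>(y\<^sub>j) = a^r\<^sub>j b\<close>.
  If a palindrome occurrence contains two b's, take the innermost pair of b's placed
  symmetrically about its centre. Either they enclose a single run \<open>a^r\<^sub>j\<close>, whose centre is
  then the centre of the palindrome (the reflection of \<open>y\<^sub>j\<close>), or the centre is itself a b
  lying between two runs of equal length; as \<open>p \<noteq> p'\<close> these come from \<open>y\<^sub>j = y\<^sub>j\<^sub>+\<^sub>1\<close>, which
  must both be a because bb is not a factor of \<open>S'\<close>, and that b is the reflection of aa.
  Conversely, a maximal occurrence with at most one b centred at a reflection would lie inside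
  a run, resp. inside \<open>a^p b a^p\<close> centred at its b: it cannot stop strictly inside (it would
  be preceded and followed by a), and the whole run, resp. \<open>a^p b a^p\<close>, is preceded and
  followed by b.\<close>

lemma fac_nth: "t < n \<Longrightarrow> fac S k n ! t = S (k + t)"
  by (simp add: fac_def)

lemma fac_2: "fac S k 2 = [S k, S (Suc k)]"
  by (simp add: fac_def numeral_2_eq_2)

lemma fac_Cons_snoc: "fac S k (n + 2) = S k # fac S (Suc k) n @ [S (Suc k + n)]"
proof -
  have "[k..<k + (n + 2)] = k # [Suc k..<Suc k + n] @ [Suc k + n]"
    by (simp add: upt_rec[of k] upt_Suc_append del: upt_Suc)
  then show ?thesis by (simp add: fac_def)
qed

lemma count_list_fac: "count_list (fac S k n) x = card {m \<in> {k..<k + n}. S m = x}"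
proof -
  have "count_list (fac S k n) x = length (filter (\<lambda>m. x = S m) [k..<k + n])"
    by (simp add: fac_def count_list_eq_length_filter filter_map comp_def)
  also have "\<dots> = card (set (filter (\<lambda>m. x = S m) [k..<k + n]))"
    by (metis distinct_card distinct_filter distinct_upt)
  also have "set (filter (\<lambda>m. x = S m) [k..<k + n]) = {m \<in> {k..<k + n}. S m = x}"
    by auto
  finally show ?thesis .
qed

lemma palindrome_fac_mirror:
  assumes "palindrome (fac S k n)" "k \<le> m" "m < k + n"
  shows "S (2*k + n - 1 - m) = S m"
proof -
  have "fac S k n ! (n - 1 - (m - k)) = fac S k n ! (m - k)"
    using assms rev_nth[of "m - k" "fac S k n"] by (simp add: palindrome_def fac_def)
  moreover have "k + (n - 1 - (m - k)) = 2*k + n - 1 - m" using assms(2,3) by simp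
  ultimately show ?thesis using assms(2,3) by (simp add: fac_nth)
qed

lemma palindrome_unique_letter_at_center:
  assumes "palindrome (fac S k n)" "count_list (fac S k n) x \<le> 1"
    and "k \<le> m" "m < k + n" "S m = x"
  shows "2*m + 1 = 2*k + n"
proof -
  let ?X = "{i \<in> {k..<k + n}. S i = x}"
  have "m \<in> ?X" "2*k + n - 1 - m \<in> ?X"
    using assms(3-5) palindrome_fac_mirror[OF assms(1,3,4)] by auto
  moreover have "card ?X \<le> 1" using assms(2) by (simp add: count_list_fac)
  ultimately have "2*k + n - 1 - m = m" using card_le_Suc0_iff_eq[of ?X] by auto
  then show ?thesis using assms(4) by simp
qed

lemma maximal_in_imp_maximal_occ:
  assumes "maximal_in P S" shows "\<exists>k. maximal_occ S P k"
proof -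
  obtain l l' i where "l \<noteq> l'" "fac S i (length P + 2) = l # P @ [l']"
    using assms unfolding maximal_in_def is_factor_def by auto
  then have "maximal_occ S P (Suc i)"
    unfolding maximal_occ_def fac_Cons_snoc by auto
  then show ?thesis ..
qed

lemma center_eq_iff:
  assumes "1 \<le> n" "1 \<le> u"
  shows "center k n = center x u \<longleftrightarrow> 2*k + n = 2*x + u"
proof -
  have "even n \<Longrightarrow> 1 \<le> n div 2" "even u \<Longrightarrow> 1 \<le> u div 2" using assms by auto
  then have "center k n = center x u \<longleftrightarrow> (odd n \<longleftrightarrow> odd u) \<and> k + n div 2 = x + u div 2"
    unfolding center_def by (auto split: if_splits)
  also have "\<dots> \<longleftrightarrow> 2*k + n = 2*x + u"
    by presburger
  finally show ?thesis .
qed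

lemma innermost_mirror_pair:
  fixes X :: "nat set"
  assumes "x \<in> X" and mirror: "\<And>m. m \<in> X \<Longrightarrow> m \<le> M \<and> M - m \<in> X"
  shows "\<exists>L\<in>X. 2*L \<le> M \<and> X \<inter> {L<..<M - L} = {}"
proof -
  define Ls where "Ls = {m \<in> X. 2*m \<le> M}"
  have "finite Ls" unfolding Ls_def by (rule finite_subset[of _ "{..M}"]) auto
  have "x \<in> Ls \<or> M - x \<in> Ls" using assms unfolding Ls_def by auto
  then have "Ls \<noteq> {}" by auto
  define L where "L = Max Ls"
  have L: "L \<in> X" "2*L \<le> M"
    using Max_in[OF \<open>finite Ls\<close> \<open>Ls \<noteq> {}\<close>] unfolding L_def Ls_def by auto
  have "m \<notin> X" if "L < m" "m < M - L" for m
  proof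
    assume "m \<in> X"
    then have "m \<in> Ls \<or> M - m \<in> Ls" using mirror unfolding Ls_def by fastforce
    moreover have "M - m > L" using that by simp
    ultimately show False
      using Max_ge[OF \<open>finite Ls\<close>, of m] Max_ge[OF \<open>finite Ls\<close>, of "M - m"] that
      unfolding L_def by linarith
  qed
  then have "X \<inter> {L<..<M - L} = {}" by auto
  with L show ?thesis by blast
qed

lemma innermost_mirror_pair_around_center:
  fixes X :: "nat set"
  assumes "L \<in> X" "x \<in> X" "x \<noteq> L" and mirror: "\<And>m. m \<in> X \<Longrightarrow> m \<le> 2*L \<and> 2*L - m \<in> X"
  shows "\<exists>L'\<in>X. L' < L \<and> 2*L - L' \<in> X \<and> X \<inter> {L'<..<2*L - L'} \<subseteq> {L}"
proof -
  have "m \<le> 2*L \<and> 2*L - m \<in> X - {L}" if "m \<in> X - {L}" for m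
    using that mirror[of m] by auto
  then obtain L' where "L' \<in> X - {L}" "2*L' \<le> 2*L" "(X - {L}) \<inter> {L'<..<2*L - L'} = {}"
    using innermost_mirror_pair[of x "X - {L}" "2*L"] assms(2,3) by blast
  then show ?thesis using mirror by (intro bexI[of _ L']) auto
qed

locale alpha_image =
  fixes p p' :: nat and y S :: iword
  assumes p_pos: "1 \<le> p" and p'_pos: "1 \<le> p'" and image: "morph_image p p' y S"
begin

abbreviation ofs :: "nat \<Rightarrow> nat" where "ofs j \<equiv> offs p p' y j"

definition run :: "nat \<Rightarrow> nat" where "run j = (if y j = A then p else p')"

lemma length_alpha_run: "length (alpha p p' (y j)) = run j + 1"
  by (cases "y j") (simp_all add: alpha_def run_def)

lemma run_pos: "1 \<le> run j"
  using p_pos p'_pos by (simp add: run_def)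

lemma ofs_0: "ofs 0 = 0"
  by (simp add: offs_def)

lemma ofs_Suc: "ofs (Suc j) = ofs j + run j + 1"
  by (simp add: offs_def length_alpha_run)

lemma S_run_A: "i < run j \<Longrightarrow> S (ofs j + i) = A"
  using image length_alpha_run[of j] unfolding morph_image_def
  by (cases "y j") (auto simp: alpha_def run_def nth_append)

lemma S_run_end_B: "S (ofs j + run j) = B"
  using image length_alpha_run[of j] unfolding morph_image_def
  by (cases "y j") (auto simp: alpha_def run_def nth_append)

lemma S_before_block_B:
  assumes "1 \<le> ofs j" shows "S (ofs j - 1) = B"
proof -
  obtain j0 where "j = Suc j0" using assms ofs_0 by (cases j) auto
  then show ?thesis using S_run_end_B[of j0] ofs_Suc[of j0] by simp
qed

lemma strict_mono_run_end: "strict_mono (\<lambda>j. ofs j + run j)"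
  unfolding strict_mono_Suc_iff by (simp add: ofs_Suc run_pos)

lemma inj_ofs: "inj ofs"
  by (rule strict_mono_imp_inj_on) (simp add: strict_mono_Suc_iff ofs_Suc)

lemma S_eq_B_iff: "S m = B \<longleftrightarrow> (\<exists>j. m = ofs j + run j)"
proof
  have "\<exists>j i. i \<le> run j \<and> m = ofs j + i"
  proof (induction m)
    case 0 show ?case using ofs_0 by (intro exI[of _ 0]) auto
  next
    case (Suc m)
    then obtain j i where "i \<le> run j" "m = ofs j + i" by blast
    show ?case
    proof (cases "i < run j")
      case True
      then show ?thesis using \<open>m = ofs j + i\<close> by (intro exI[of _ j] exI[of _ "Suc i"]) auto
    next
      case False
      then show ?thesis using \<open>m = ofs j + i\<close> \<open>i \<le> run j\<close> ofs_Suc[of j]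
        by (intro exI[of _ "Suc j"] exI[of _ 0]) auto
    qed
  qed
  then obtain j i where "i \<le> run j" "m = ofs j + i" by blast
  moreover assume "S m = B"
  ultimately show "\<exists>j. m = ofs j + run j" using S_run_A[of i j] by (cases "i < run j") auto
qed (auto simp: S_run_end_B)

lemma S_after_B:
  assumes "S m = B" shows "S (Suc m) = A"
proof -
  obtain j where "m = ofs j + run j" using assms S_eq_B_iff by blast
  then have "Suc m = ofs (Suc j) + 0" by (simp add: ofs_Suc)
  then show ?thesis using S_run_A[of 0 "Suc j"] run_pos[of "Suc j"] by simp
qed

lemma consecutive_Bs:
  assumes "S x = B" "S z = B" "x < z" and no_B: "\<And>m. x < m \<Longrightarrow> m < z \<Longrightarrow> S m \<noteq> B"
  shows "\<exists>j. x + 1 = ofs j \<and> z = ofs j + run j"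
proof -
  obtain j0 j1 where j: "x = ofs j0 + run j0" "z = ofs j1 + run j1"
    using assms(1,2) S_eq_B_iff by blast
  then have "j0 < j1" using \<open>x < z\<close> strict_mono_less[OF strict_mono_run_end] by blast
  have "\<not> Suc j0 < j1"
  proof
    assume "Suc j0 < j1"
    then have "ofs (Suc j0) + run (Suc j0) < z"
      using j strict_mono_less[OF strict_mono_run_end] by blast
    moreover have "x < ofs (Suc j0) + run (Suc j0)" using j ofs_Suc[of j0] by simp
    ultimately show False using no_B S_run_end_B by blast
  qed
  then have "j1 = Suc j0" using \<open>j0 < j1\<close> by simp
  then show ?thesis using j ofs_Suc[of j0] by (intro exI[of _ j1]) simp
qed

lemma center_occ_palindrome_center:
  assumes "palindrome (fac S k n)" "1 \<le> n"
  shows "center_occ S (center k n)"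
proof (cases "odd n")
  case True
  then show ?thesis by (cases "S (k + n div 2)") (auto simp: center_def center_occ_def fac_def)
next
  case False
  define c where "c = k + n div 2 - 1"
  have "2 \<le> n" using False assms(2) by presburger
  then have "k \<le> c" "c < k + n" "2*k + n - 1 - c = Suc c"
    using False unfolding c_def by auto
  then have "S (Suc c) = S c" using palindrome_fac_mirror[OF assms(1)] by metis
  then have "S c = A" using S_after_B[of c] by (cases "S c") auto
  then have "fac S c 2 = [A, A]" using \<open>S (Suc c) = S c\<close> by (simp add: fac_2)
  moreover have "center k n = (c, 2)" using False unfolding center_def c_def by simp
  ultimately show ?thesis unfolding center_occ_def by simp
qed

lemma maximal_occ_center_ne_run_center:
  assumes occ: "maximal_occ S P k" and "palindrome P" "count_list P B \<le> 1" "P \<noteq> []"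
  shows "center k (length P) \<noteq> center (ofs j) (run j)"
proof
  let ?n = "length P"
  assume "center k ?n = center (ofs j) (run j)"
  then have eq: "2*k + ?n = 2*ofs j + run j"
    using center_eq_iff run_pos \<open>P \<noteq> []\<close> by (simp add: Suc_le_eq)
  have k: "1 \<le> k" and flank: "S (k - 1) \<noteq> S (k + ?n)" and fac: "fac S k ?n = P"
    using occ unfolding maximal_occ_def by auto
  consider "?n < run j" | "?n = run j" | "run j < ?n" by linarith
  then show False
  proof cases
    case 1
    have "S (ofs j + (k - 1 - ofs j)) = A" "S (ofs j + (k + ?n - ofs j)) = A"
      using 1 eq by (intro S_run_A; simp)+
    moreover have "ofs j + (k - 1 - ofs j) = k - 1" "ofs j + (k + ?n - ofs j) = k + ?n"
      using 1 eq by auto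
    ultimately show False using flank by simp
  next
    case 2
    then have "k = ofs j" using eq by simp
    then show False using flank k S_before_block_B[of j] S_run_end_B[of j] 2 by simp
  next
    case 3
    have "2*(ofs j + run j) + 1 = 2*k + ?n"
      using 3 eq S_run_end_B[of j] \<open>palindrome P\<close> \<open>count_list P B \<le> 1\<close> fac
      by (intro palindrome_unique_letter_at_center[of S k ?n B]) auto
    then show False using eq by simp
  qed
qed

lemma maximal_occ_center_ne_B_between_equal_runs:
  assumes occ: "maximal_occ S P k" and "palindrome P" "count_list P B \<le> 1"
    and runs: "run (Suc j) = run j"
  shows "center k (length P) \<noteq> (ofs j + run j, 1)"
proof
  let ?n = "length P" and ?r = "run j"
  assume c: "center k ?n = (ofs j + ?r, 1)"
  then have "odd ?n" unfolding center_def by (auto split: if_splits)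
  then obtain h where n: "?n = 2*h + 1" using oddE by blast
  then have kh: "k + h = ofs j + ?r" using c unfolding center_def by simp
  then have next_block: "ofs (Suc j) = k + h + 1" by (simp add: ofs_Suc)
  have k: "1 \<le> k" and flank: "S (k - 1) \<noteq> S (k + ?n)" and fac: "fac S k ?n = P"
    using occ unfolding maximal_occ_def by auto
  consider "h < ?r" | "h = ?r" | "?r < h" by linarith
  then show False
  proof cases
    case 1
    have "S (ofs j + (?r - h - 1)) = A" "S (ofs (Suc j) + h) = A"
      using 1 runs by (intro S_run_A; simp)+
    moreover have "ofs j + (?r - h - 1) = k - 1" "ofs (Suc j) + h = k + ?n"
      using 1 kh next_block n by auto
    ultimately show False using flank by simp
  next
    case 2
    then have "k = ofs j" "k + ?n = ofs (Suc j) + run (Suc j)"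
      using kh next_block n runs by auto
    then show False using flank k S_before_block_B[of j] S_run_end_B[of "Suc j"] by simp
  next
    case 3
    have "2*(ofs (Suc j) + run (Suc j)) + 1 = 2*k + ?n"
      using 3 n runs next_block S_run_end_B[of "Suc j"] \<open>palindrome P\<close> \<open>count_list P B \<le> 1\<close> fac
      by (intro palindrome_unique_letter_at_center[of S k ?n B]) auto
    then show False using n next_block by simp
  qed
qed

lemma maximal_occ_center_not_reflection:
  assumes "maximal_occ S P k" "palindrome P" "count_list P B \<le> 1" "P \<noteq> []"
  shows "center k (length P) \<notin> reflections p p' y"
proof
  assume "center k (length P) \<in> reflections p p' y"
  then consider j where "center k (length P) = center (ofs j) (run j)"
    | j where "center k (length P) = (ofs j + p, 1)" "y j = A" "y (Suc j) = A"
    unfolding reflections_def run_def by blast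
  then show False
  proof cases
    case 1
    then show ?thesis using maximal_occ_center_ne_run_center assms by blast
  next
    case (2 j)
    then have "run j = p" "run (Suc j) = p" by (simp_all add: run_def)
    then show ?thesis using 2 maximal_occ_center_ne_B_between_equal_runs[OF assms(1-3), of j] by simp
  qed
qed

lemma equal_runs_imp_A:
  assumes "p \<noteq> p'" and no_BB: "\<not> is_factor [B, B] y" and "run (Suc j) = run j"
  shows "y j = A" "y (Suc j) = A"
proof -
  have same: "y (Suc j) = y j"
    using assms(1,3) unfolding run_def by (cases "y j"; cases "y (Suc j)") auto
  have "fac y j 2 = [y j, y j]" using same by (simp add: fac_2)
  then have "y j \<noteq> B" using no_BB unfolding is_factor_def by (metis length_Cons list.size(3) numeral_2_eq_2)
  then show "y j = A" "y (Suc j) = A" using same by (cases "y j"; simp)+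
qed

lemma run_center_in_reflections: "center (ofs j) (run j) \<in> reflections p p' y"
  unfolding reflections_def run_def by blast

lemma B_between_equal_runs_reflection:
  assumes "p \<noteq> p'" "\<not> is_factor [B, B] y"
    and "S L' = B" "S L = B" "S R' = B" "L' < L" "L < R'" "L' + R' = 2*L"
    and no_B: "\<And>m. L' < m \<Longrightarrow> m < R' \<Longrightarrow> m \<noteq> L \<Longrightarrow> S m \<noteq> B"
  shows "(L, 1) \<in> reflections p p' y"
proof -
  obtain j where j: "L' + 1 = ofs j" "L = ofs j + run j"
    using consecutive_Bs[of L' L] assms(3,4,6) no_B assms(7) by force
  obtain j' where j': "L + 1 = ofs j'" "R' = ofs j' + run j'"
    using consecutive_Bs[of L R'] assms(4,5,7) no_B assms(6) by force
  have "j' = Suc j" using j j' ofs_Suc[of j] inj_ofs by (simp add: inj_eq)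
  then have "run (Suc j) = run j" using j j' assms(8) by simp
  then have "y j = A" "y (Suc j) = A" using equal_runs_imp_A assms(1,2) by blast+
  moreover have "L = ofs j + p" using j \<open>y j = A\<close> by (simp add: run_def)
  ultimately show ?thesis unfolding reflections_def by blast
qed

lemma two_Bs_center_reflection:
  assumes "p \<noteq> p'" "\<not> is_factor [B, B] y"
    and pal: "palindrome (fac S k n)" and two_B: "1 < count_list (fac S k n) B"
  shows "center k n \<in> reflections p p' y"
proof -
  define X where "X = {m \<in> {k..<k + n}. S m = B}"
  define M where "M = 2*k + n - 1"
  have "1 < card X" using two_B by (simp add: X_def count_list_fac)
  then obtain x x' where x: "x \<in> X" "x' \<in> X" "x \<noteq> x'"
    using card_le_Suc0_iff_eq[of X] by (force simp: X_def)
  then have n: "1 \<le> n" unfolding X_def by auto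
  have mirror: "m \<le> M \<and> M - m \<in> X" if "m \<in> X" for m
    using that palindrome_fac_mirror[OF pal] unfolding X_def M_def by auto
  have no_B: "S m \<noteq> B"
    if "X \<inter> {L<..<R} \<subseteq> Z" "k \<le> L" "R < k + n" "L < m" "m < R" "m \<notin> Z" for L R Z m
  proof
    assume "S m = B"
    then have "m \<in> X \<inter> {L<..<R}" using that(2-5) unfolding X_def by auto
    then show False using that(1,6) by blast
  qed
  obtain L where L: "L \<in> X" "2*L \<le> M" "X \<inter> {L<..<M - L} = {}"
    using innermost_mirror_pair[of x X M] x(1) mirror by blast
  show ?thesis
  proof (cases "2*L < M")
    case True
    have "M - L \<in> X" "k \<le> L" using mirror L(1) by (auto simp: X_def)
    then obtain j where "Suc L = ofs j" "M - L = ofs j + run j"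
      using True L no_B[of L "M - L" "{}"] consecutive_Bs[of L "M - L"] by (force simp: X_def)
    then have "center k n = center (ofs j) (run j)"
      using True n run_pos[of j] by (subst center_eq_iff) (auto simp: M_def)
    then show ?thesis using run_center_in_reflections by simp
  next
    case False
    then have mid: "2*L = M" using L(2) by simp
    obtain x'' where "x'' \<in> X" "x'' \<noteq> L" using x by blast
    then obtain L' where L': "L' \<in> X" "L' < L" "M - L' \<in> X" "X \<inter> {L'<..<M - L'} \<subseteq> {L}"
      using innermost_mirror_pair_around_center[of L X x''] L(1) mirror mid by blast
    moreover have "k \<le> L'" "M - L' < k + n" using L' by (auto simp: X_def)
    moreover have "S m \<noteq> B" if "L' < m" "m < M - L'" "m \<noteq> L" for m
      using no_B[OF L'(4)] that \<open>k \<le> L'\<close> \<open>M - L' < k + n\<close> by blast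
    ultimately have "(L, 1) \<in> reflections p p' y"
      using L(1) mid assms(1,2)
      by (intro B_between_equal_runs_reflection[of L' L "M - L'"]) (auto simp: X_def)
    moreover have "center k n = (L, 1)"
      using mid n unfolding center_def M_def by (auto simp: X_def) presburger+
    ultimately show ?thesis by simp
  qed
qed

end

theorem lemma4:
  fixes p p' :: nat and S' S :: iword and P :: "letter list"
  assumes "p \<ge> 1" and "p' \<ge> 1" and "p = p' + 1 \<or> p' = p + 1"
    and "sturmian S'"
    and "\<not> is_factor [B, B] S'"
    and "morph_image p p' S' S"
    and "palindrome P" and "P \<noteq> []"
    and "maximal_in P S"
  shows "original_pal p p' S' S P \<longleftrightarrow> count_list P B \<le> 1"
proof -
  interpret alpha_image p p' S' S using assms(1,2,6) by unfold_locales
  have "p \<noteq> p'" using assms(3) by auto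
  show ?thesis
  proof
    assume "original_pal p p' S' S P"
    then obtain k where occ: "maximal_occ S P k" and "center k (length P) \<notin> reflections p p' S'"
      unfolding original_pal_def original_center_def by blast
    moreover have "fac S k (length P) = P" using occ unfolding maximal_occ_def by blast
    ultimately show "count_list P B \<le> 1"
      using two_Bs_center_reflection[OF \<open>p \<noteq> p'\<close> assms(5)] assms(7) by force
  next
    assume "count_list P B \<le> 1"
    obtain k where occ: "maximal_occ S P k" using maximal_in_imp_maximal_occ assms(9) by blast
    then have "fac S k (length P) = P" unfolding maximal_occ_def by blast
    then have "original_center p p' S' S (center k (length P))"
      unfolding original_center_def
      using center_occ_palindrome_center[of k "length P"] maximal_occ_center_not_reflection[OF occ]
        assms(7,8) \<open>count_list P B \<le> 1\<close> by (simp add: Suc_le_eq)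
    with occ show "original_pal p p' S' S P" unfolding original_pal_def by blast
  qed
qed

end
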